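(* Let $S\subseteq\mathbb{N}[x]^n$. Then the set of minimal elements of $S$ with respect to the partial order $\preceq$ is finite.
   Context: For $f=\sum_{i}f_ix^i,g=\sum_ig_ix^i\in\mathbb{N}[x]$, with coefficients padded by zeros up to a common index $K$ exceeding both degrees, $f\preceq g$ iff $\sum_{j=i}^Kf_j\le\sum_{j=i}^Kg_j$ for all $i=0,\ldots,K$. For $\mathbf{u}=(u_1,\ldots,u_n),\mathbf{v}=(v_1,\ldots,v_n)\in\mathbb{N}[x]^n$, $\mathbf{u}\preceq\mathbf{v}$ iff $u_i\preceq v_i$ for all $i$. *)

theory Defs
  imports "HOL-Computational_Algebra.Polynomial"
begin

definition poly_tail_le :: "nat poly \<Rightarrow> nat poly \<Rightarrow> bool" where
  "poly_tail_le f g \<longleftrightarrow>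
     (let K = Suc (max (degree f) (degree g)) in
      \<forall>i\<le>K. (\<Sum>j=i..K. coeff f j) \<le> (\<Sum>j=i..K. coeff g j))"

definition vec_tail_le :: "nat poly list \<Rightarrow> nat poly list \<Rightarrow> bool" where
  "vec_tail_le u v \<longleftrightarrow> length u = length v \<and>
     (\<forall>i<length u. poly_tail_le (u ! i) (v ! i))"

definition minimal_elements :: "nat poly list set \<Rightarrow> nat poly list set" where
  "minimal_elements S = {u \<in> S. \<not> (\<exists>v\<in>S. vec_tail_le v u \<and> v \<noteq> u)}"

end

theory Submission
  imports Defs "HOL-Library.Ramsey"
begin

text \<open>Distinct minimal elements are pairwise incomparable, so it suffices that the order is almost
  full (a well-quasi-order). A polynomial enters the order only through its sequence of tail sums,
  a nonincreasing, eventually zero sequence, i.e.\ the row lengths of a Young diagram, and the order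
  becomes containment of diagrams. Containment is almost full: if the first diagram D of a sequence
  lies in no later one, each later diagram misses a cell of D, so from row L (the number of rows
  of D) on its rows are shorter than M (the first row of D). Such diagrams are compared
  monotonically through their first L rows and their M column lengths below row L, and Dickson's
  lemma, obtained from Ramsey's theorem, applies.\<close>

definition almost_full_on :: "('a \<Rightarrow> 'a \<Rightarrow> bool) \<Rightarrow> 'a set \<Rightarrow> bool" where
  "almost_full_on P A \<longleftrightarrow>
     (\<forall>f :: nat \<Rightarrow> 'a. (\<forall>i. f i \<in> A) \<longrightarrow> (\<exists>i j. i < j \<and> P (f i) (f j)))"

lemma almost_full_onI:
  assumes "\<And>f :: nat \<Rightarrow> 'a. (\<And>i. f i \<in> A) \<Longrightarrow> \<exists>i j. i < j \<and> P (f i) (f j)"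
  shows "almost_full_on P A"
  using assms unfolding almost_full_on_def by blast

lemma almost_full_onD:
  fixes f :: "nat \<Rightarrow> 'a"
  assumes "almost_full_on P A" "\<And>i. f i \<in> A"
  obtains i j where "i < j" "P (f i) (f j)"
  using assms unfolding almost_full_on_def by blast

lemma almost_full_on_imp_homogeneous_subseq:
  fixes f :: "nat \<Rightarrow> 'a"
  assumes "almost_full_on P A" "\<And>i. f i \<in> A"
  shows "\<exists>\<phi> :: nat \<Rightarrow> nat. strict_mono \<phi> \<and> (\<forall>i j. i < j \<longrightarrow> P (f (\<phi> i)) (f (\<phi> j)))"
proof -
  define c :: "nat set \<Rightarrow> nat" where "c X = (if P (f (Min X)) (f (Max X)) then 0 else 1)" for X
  have "\<exists>Y t. Y \<subseteq> UNIV \<and> infinite Y \<and> t < 2 \<and> (\<forall>x\<in>Y. \<forall>y\<in>Y. x \<noteq> y \<longrightarrow> c {x, y} = t)"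
    by (rule Ramsey2) (auto simp: c_def)
  then obtain Y t where Y: "infinite Y" and hom: "\<forall>x\<in>Y. \<forall>y\<in>Y. x \<noteq> y \<longrightarrow> c {x, y} = t"
    by blast
  define \<phi> where "\<phi> = enumerate Y"
  have mono: "strict_mono \<phi>"
    unfolding \<phi>_def strict_mono_def using enumerate_mono Y by blast
  have colour: "c {\<phi> i, \<phi> j} = t" if "i < j" for i j
    using hom enumerate_in_set[OF Y] strict_monoD[OF mono that] unfolding \<phi>_def
    by (metis less_irrefl)
  have pair: "c {\<phi> i, \<phi> j} = 0 \<longleftrightarrow> P (f (\<phi> i)) (f (\<phi> j))" if "i < j" for i j
    using strict_monoD[OF mono that] by (simp add: c_def)
  \<comment> \<open>By Ramsey, all pairs in Y have the same colour; it cannot be the bad one as P is almost full.\<close>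
  obtain i j where "i < j" "P (f (\<phi> i)) (f (\<phi> j))"
    by (rule almost_full_onD[of P A "\<lambda>i. f (\<phi> i)", OF assms])
  then have "t = 0" using colour pair by metis
  then have "\<forall>i j. i < j \<longrightarrow> P (f (\<phi> i)) (f (\<phi> j))" using colour pair by metis
  with mono show ?thesis by blast
qed

lemma almost_full_on_map:
  assumes "almost_full_on Q B" "h ` A \<subseteq> B"
    and "\<And>a b. a \<in> A \<Longrightarrow> b \<in> A \<Longrightarrow> Q (h a) (h b) \<Longrightarrow> P a b"
  shows "almost_full_on P A"
proof (rule almost_full_onI)
  fix f :: "nat \<Rightarrow> _" assume f: "\<And>i. f i \<in> A"
  then have "h (f i) \<in> B" for i using assms(2) by blast
  then obtain i j where "i < j" "Q (h (f i)) (h (f j))"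
    by (rule almost_full_onD[OF assms(1)])
  then have "i < j \<and> P (f i) (f j)" using assms(3) f by blast
  then show "\<exists>i j. i < j \<and> P (f i) (f j)" by blast
qed

lemma almost_full_on_wellorder: "almost_full_on (\<le>) (UNIV :: 'a :: wellorder set)"
proof (rule almost_full_onI)
  fix f :: "nat \<Rightarrow> 'a"
  obtain i where "f i = (LEAST x. x \<in> range f)"
    using LeastI[of "\<lambda>x. x \<in> range f" "f 0"] by auto
  then have "f i \<le> f (Suc i)" by (simp add: Least_le)
  then show "\<exists>i j. i < j \<and> f i \<le> f j" by blast
qed

lemma almost_full_on_Times:
  assumes "almost_full_on P A" "almost_full_on Q B"
  shows "almost_full_on (rel_prod P Q) (A \<times> B)"
proof (rule almost_full_onI)
  fix f :: "nat \<Rightarrow> _" assume "\<And>i. f i \<in> A \<times> B"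
  then have fst_in: "fst (f i) \<in> A" and snd_in: "snd (f i) \<in> B" for i
    by (auto simp: mem_Times_iff)
  obtain \<phi> :: "nat \<Rightarrow> nat" where \<phi>: "strict_mono \<phi>" "\<And>i j. i < j \<Longrightarrow> P (fst (f (\<phi> i))) (fst (f (\<phi> j)))"
    using almost_full_on_imp_homogeneous_subseq[of P A "\<lambda>i. fst (f i)", OF assms(1) fst_in] by blast
  obtain i j where ij: "i < j" "Q (snd (f (\<phi> i))) (snd (f (\<phi> j)))"
    by (rule almost_full_onD[of Q B "\<lambda>i. snd (f (\<phi> i))", OF assms(2) snd_in])
  have "\<phi> i < \<phi> j" using \<phi>(1) ij(1) by (rule strict_monoD)
  moreover have "rel_prod P Q (f (\<phi> i)) (f (\<phi> j))"
    using \<phi>(2)[OF ij(1)] ij(2) by (simp add: rel_prod_sel)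
  ultimately show "\<exists>i j. i < j \<and> rel_prod P Q (f i) (f j)" by blast
qed

lemma almost_full_on_lists:
  assumes "almost_full_on P A"
  shows "almost_full_on (list_all2 P) {xs. length xs = m \<and> set xs \<subseteq> A}"
proof (induction m)
  case 0
  show ?case
  proof (rule almost_full_onI)
    fix f :: "nat \<Rightarrow> _" assume "\<And>i. f i \<in> {xs. length xs = 0 \<and> set xs \<subseteq> A}"
    then have "f 0 = []" "f 1 = []" by auto
    then show "\<exists>i j. i < j \<and> list_all2 P (f i) (f j)" by (metis list_all2_Nil zero_less_one)
  qed
next
  case (Suc m)
  show ?case
  proof (rule almost_full_on_map[OF almost_full_on_Times[OF assms Suc]])
    show "(\<lambda>xs. (hd xs, tl xs)) ` {xs. length xs = Suc m \<and> set xs \<subseteq> A}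
      \<subseteq> A \<times> {xs. length xs = m \<and> set xs \<subseteq> A}"
      by (auto simp: length_Suc_conv)
    show "list_all2 P xs ys"
      if "xs \<in> {xs. length xs = Suc m \<and> set xs \<subseteq> A}" "ys \<in> {xs. length xs = Suc m \<and> set xs \<subseteq> A}"
        "rel_prod P (list_all2 P) (hd xs, tl xs) (hd ys, tl ys)"
      for xs ys
      using that by (auto simp: length_Suc_conv)
  qed
qed

lemma almost_full_on_imp_finite_antichain:
  assumes "almost_full_on P A" "B \<subseteq> A" "\<And>u v. u \<in> B \<Longrightarrow> v \<in> B \<Longrightarrow> P u v \<Longrightarrow> u = v"
  shows "finite B"
proof (rule ccontr)
  assume "infinite B"
  then obtain e :: "nat \<Rightarrow> _" where e: "inj e" "range e \<subseteq> B"
    using infinite_countable_subset by blast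
  then have "e i \<in> A" for i using assms(2) by blast
  then obtain i j where "i < j" "P (e i) (e j)"
    by (rule almost_full_onD[OF assms(1)])
  then have "e i = e j" using assms(3) e(2) by blast
  with \<open>i < j\<close> show False using e(1) by (simp add: inj_eq)
qed

text \<open>A Young diagram is given by its row lengths: b k is the length of row k.\<close>

definition young_diagrams :: "(nat \<Rightarrow> nat) set" where
  "young_diagrams = {b. antimono b \<and> (\<exists>L. \<forall>k\<ge>L. b k = 0)}"

definition column_length :: "nat \<Rightarrow> (nat \<Rightarrow> nat) \<Rightarrow> nat \<Rightarrow> nat" where
  "column_length L b v = card {k. L \<le> k \<and> v \<le> b k}"

lemma column_length_ge:
  assumes "b \<in> young_diagrams" "L \<le> k" "0 < b k"
  shows "Suc k - L \<le> column_length L b (b k)"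
proof -
  obtain N where N: "\<forall>k\<ge>N. b k = 0" using assms(1) by (auto simp: young_diagrams_def)
  have "{k'. L \<le> k' \<and> b k \<le> b k'} \<subseteq> {..<N}"
    using N assms(3) by (auto simp: not_less) (metis le_zero_eq not_le)
  then have "finite {k'. L \<le> k' \<and> b k \<le> b k'}" by (rule finite_subset) simp
  moreover have "{L..k} \<subseteq> {k'. L \<le> k' \<and> b k \<le> b k'}"
    using assms(1) by (auto simp: young_diagrams_def dest: antimonoD)
  ultimately have "card {L..k} \<le> column_length L b (b k)"
    unfolding column_length_def by (rule card_mono)
  then show ?thesis by simp
qed

lemma column_length_le:
  assumes "antimono b" "b k < v"
  shows "column_length L b v \<le> k - L"
proof -
  have "{k'. L \<le> k' \<and> v \<le> b k'} \<subseteq> {L..<k}"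
  proof
    fix x assume x: "x \<in> {k'. L \<le> k' \<and> v \<le> b k'}"
    have "x < k"
    proof (rule ccontr)
      assume "\<not> x < k"
      then have "b x \<le> b k" using assms(1) by (simp add: antimonoD)
      then show False using x assms(2) by simp
    qed
    then show "x \<in> {L..<k}" using x by simp
  qed
  then show ?thesis
    unfolding column_length_def using card_mono[of "{L..<k}"] by fastforce
qed

lemma almost_full_on_bounded_young_diagrams:
  "almost_full_on (\<le>) {b \<in> young_diagrams. \<forall>k\<ge>L. b k < M}"
proof (rule almost_full_on_map[OF almost_full_on_lists[OF almost_full_on_wellorder]])
  \<comment> \<open>Rows above L are recorded directly, the rest of the diagram (of width below M) by its columns.\<close>
  define h where "h b = map b [0..<L] @ map (column_length L b) [0..<M]" for b :: "nat \<Rightarrow> nat"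
  show "h ` {b \<in> young_diagrams. \<forall>k\<ge>L. b k < M} \<subseteq> {xs. length xs = L + M \<and> set xs \<subseteq> UNIV}"
    by (auto simp: h_def)
  show "a \<le> b"
    if a: "a \<in> {b \<in> young_diagrams. \<forall>k\<ge>L. b k < M}" and b: "b \<in> {b \<in> young_diagrams. \<forall>k\<ge>L. b k < M}"
      and "list_all2 (\<le>) (h a) (h b)" for a b
  proof -
    have "list_all2 (\<le>) (map a [0..<L]) (map b [0..<L])"
      and "list_all2 (\<le>) (map (column_length L a) [0..<M]) (map (column_length L b) [0..<M])"
      using \<open>list_all2 (\<le>) (h a) (h b)\<close> by (simp_all add: h_def list_all2_append)
    then have rows: "\<And>i. i < L \<Longrightarrow> a i \<le> b i"
      and columns: "\<And>v. v < M \<Longrightarrow> column_length L a v \<le> column_length L b v"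
      by (simp_all add: list_all2_conv_all_nth)
    show "a \<le> b"
    proof (rule le_funI, rule ccontr)
      fix i assume "\<not> a i \<le> b i"
      then have "b i < a i" by simp
      then have "L \<le> i" using rows by (meson leD not_le)
      with \<open>b i < a i\<close> have "column_length L b (a i) < column_length L a (a i)"
        using column_length_le[of b i "a i" L] column_length_ge[of a L i] a b
        by (simp add: young_diagrams_def)
      moreover have "a i < M" using a \<open>L \<le> i\<close> by simp
      ultimately show False using columns by (meson leD)
    qed
  qed
qed

lemma almost_full_on_young_diagrams: "almost_full_on (\<le>) young_diagrams"
proof (rule almost_full_onI)
  fix f :: "nat \<Rightarrow> nat \<Rightarrow> nat" assume f: "\<And>i. f i \<in> young_diagrams"
  show "\<exists>i j. i < j \<and> f i \<le> f j"
  proof (cases "\<exists>j>0. f 0 \<le> f j")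
    case True
    then show ?thesis by blast
  next
    case False
    obtain L where L: "\<forall>k\<ge>L. f 0 k = 0" using f by (auto simp: young_diagrams_def)
    define M where "M = f 0 0"
    \<comment> \<open>Each later diagram leaves a cell of f 0 uncovered, in a row below L and a column below M.\<close>
    have "f (Suc j) \<in> {b \<in> young_diagrams. \<forall>k\<ge>L. b k < M}" for j
    proof -
      obtain i where i: "f (Suc j) i < f 0 i" using False by (metis le_funI not_le zero_less_Suc)
      then have "i < L" using L by (metis not_le not_less0)
      have "f (Suc j) k < M" if "L \<le> k" for k
      proof -
        have "f (Suc j) k \<le> f (Suc j) i"
          using f[of "Suc j"] \<open>i < L\<close> that by (simp add: young_diagrams_def antimonoD)
        also have "\<dots> < f 0 i" using i .
        also have "\<dots> \<le> f 0 0" using f[of 0] by (simp add: young_diagrams_def antimonoD)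
        finally show ?thesis unfolding M_def .
      qed
      then show ?thesis using f by simp
    qed
    then obtain i j where "i < j" "f (Suc i) \<le> f (Suc j)"
      by (rule almost_full_onD[OF almost_full_on_bounded_young_diagrams])
    then show ?thesis by (metis Suc_mono)
  qed
qed

definition tail_sum :: "nat poly \<Rightarrow> nat \<Rightarrow> nat" where
  "tail_sum p i = (\<Sum>j=i..degree p. coeff p j)"

lemma tail_sum_in_young_diagrams: "tail_sum p \<in> young_diagrams"
proof -
  have "antimono (tail_sum p)"
    unfolding tail_sum_def by (intro antimonoI sum_mono2) auto
  moreover have "\<forall>k\<ge>Suc (degree p). tail_sum p k = 0" by (simp add: tail_sum_def)
  ultimately show ?thesis unfolding young_diagrams_def by blast
qed

lemma sum_coeff_eq_tail_sum:
  assumes "degree p \<le> K"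
  shows "(\<Sum>j=i..K. coeff p j) = tail_sum p i"
  unfolding tail_sum_def
  by (rule sum.mono_neutral_right) (use assms in \<open>auto intro: coeff_eq_0\<close>)

lemma poly_tail_le_iff_tail_sum_le: "poly_tail_le f g \<longleftrightarrow> tail_sum f \<le> tail_sum g"
proof -
  define K where "K = Suc (max (degree f) (degree g))"
  have f: "(\<Sum>j=i..K. coeff f j) = tail_sum f i" and g: "(\<Sum>j=i..K. coeff g j) = tail_sum g i" for i
    by (rule sum_coeff_eq_tail_sum, simp add: K_def)+
  have "tail_sum f i = 0" "tail_sum g i = 0" if "K < i" for i
    using that by (simp_all add: K_def tail_sum_def)
  then have "(\<forall>i\<le>K. tail_sum f i \<le> tail_sum g i) \<longleftrightarrow> tail_sum f \<le> tail_sum g"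
    by (metis le_funD le_funI le_refl not_le)
  then show ?thesis unfolding poly_tail_le_def Let_def K_def[symmetric] f g .
qed

lemma almost_full_on_vec_tail_le: "almost_full_on vec_tail_le {u. length u = n}"
proof (rule almost_full_on_map[OF almost_full_on_lists[OF almost_full_on_young_diagrams]])
  show "map tail_sum ` {u. length u = n} \<subseteq> {xs. length xs = n \<and> set xs \<subseteq> young_diagrams}"
    using tail_sum_in_young_diagrams by auto
  show "vec_tail_le u v" if "list_all2 (\<le>) (map tail_sum u) (map tail_sum v)" for u v
    using that by (auto simp: vec_tail_le_def list_all2_conv_all_nth poly_tail_le_iff_tail_sum_le)
qed

theorem lemma4p9:
  fixes S :: "nat poly list set" and n :: nat
  assumes "\<forall>u\<in>S. length u = n"
  shows "finite (minimal_elements S)"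
proof (rule almost_full_on_imp_finite_antichain[OF almost_full_on_vec_tail_le])
  show "minimal_elements S \<subseteq> {u. length u = n}"
    using assms by (auto simp: minimal_elements_def)
  show "u = v" if "u \<in> minimal_elements S" "v \<in> minimal_elements S" "vec_tail_le u v" for u v
    using that by (auto simp: minimal_elements_def)
qed

end
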